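(* Let $Q\subseteq P$ be parabolic subgroups of a semisimple algebraic group $G$ and let $\theta>\phi$ in $W/W_Q$ with $\pi_P(\theta)>\pi_P(\phi)$ in $W/W_P$. Then there exists $\psi\in W/W_Q$ covered by $\theta$ such that $\psi\ge\phi$ and $\pi_P(\theta)>\pi_P(\psi)$.
   Context: $G$ is a semisimple algebraic group with maximal torus $T$, Borel subgroup $B\supseteq T$ and Weyl group $W$; parabolic subgroups are closed subgroups containing $B$, with Weyl groups $W_Q\subseteq W$. $W/W_Q$ carries the Bruhat order (a graded poset), and $\pi_P:W/W_Q\to W/W_P$ is the natural (monotone) projection for $Q\subseteq P$. *)

theory Defs
  imports "HOL-Analysis.Analysis"
begin

text \<open>Root-system model of the Weyl group of a semisimple group G with maximal torus T
and Borel B: the root system R of (G,T) in a real Euclidean space, the base (simple roots)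
determined by B, the Weyl group generated by simple reflections, Bruhat order, and
parabolic subgroups P \<supseteq> B corresponding to subsets J of the simple roots.\<close>

definition refl :: "'a::euclidean_space \<Rightarrow> 'a \<Rightarrow> 'a" where
  "refl \<alpha> v = v - (2 * (v \<bullet> \<alpha>) / (\<alpha> \<bullet> \<alpha>)) *\<^sub>R \<alpha>"

text \<open>Reduced crystallographic root system spanning the space (semisimple case).\<close>
definition root_system :: "'a::euclidean_space set \<Rightarrow> bool" where
  "root_system R \<longleftrightarrow> finite R \<and> 0 \<notin> R \<and> span R = UNIV
     \<and> (\<forall>\<alpha>\<in>R. refl \<alpha> ` R = R)
     \<and> (\<forall>\<alpha>\<in>R. \<forall>\<beta>\<in>R. 2 * (\<beta> \<bullet> \<alpha>) / (\<alpha> \<bullet> \<alpha>) \<in> \<int>)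
     \<and> (\<forall>\<alpha>\<in>R. \<forall>c. c *\<^sub>R \<alpha> \<in> R \<longrightarrow> c = 1 \<or> c = -1)"

definition is_base :: "'a::euclidean_space set \<Rightarrow> 'a set \<Rightarrow> bool" where
  "is_base R \<Delta> \<longleftrightarrow> \<Delta> \<subseteq> R \<and> independent \<Delta>
     \<and> (\<forall>\<beta>\<in>R. \<exists>c. \<beta> = (\<Sum>\<alpha>\<in>\<Delta>. c \<alpha> *\<^sub>R \<alpha>)
                   \<and> ((\<forall>\<alpha>\<in>\<Delta>. c \<alpha> \<ge> 0) \<or> (\<forall>\<alpha>\<in>\<Delta>. c \<alpha> \<le> 0)))"

inductive_set refl_group :: "'a::euclidean_space set \<Rightarrow> ('a \<Rightarrow> 'a) set"
  for J :: "'a set" where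
  id_in: "id \<in> refl_group J"
| step: "w \<in> refl_group J \<Longrightarrow> \<alpha> \<in> J \<Longrightarrow> refl \<alpha> \<circ> w \<in> refl_group J"

definition wlen :: "'a::euclidean_space set \<Rightarrow> ('a \<Rightarrow> 'a) \<Rightarrow> nat" where
  "wlen \<Delta> w = (LEAST n. \<exists>xs. length xs = n \<and> set xs \<subseteq> \<Delta> \<and> w = foldr (\<lambda>\<alpha> f. refl \<alpha> \<circ> f) xs id)"

definition bruhat_step :: "'a::euclidean_space set \<Rightarrow> 'a set \<Rightarrow> ('a \<Rightarrow> 'a) \<Rightarrow> ('a \<Rightarrow> 'a) \<Rightarrow> bool" where
  "bruhat_step R \<Delta> w w' \<longleftrightarrow> w \<in> refl_group \<Delta> \<and>
     (\<exists>\<beta>\<in>R. w' = w \<circ> refl \<beta> \<and> wlen \<Delta> w < wlen \<Delta> w')"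

definition bruhat_le :: "'a::euclidean_space set \<Rightarrow> 'a set \<Rightarrow> ('a \<Rightarrow> 'a) \<Rightarrow> ('a \<Rightarrow> 'a) \<Rightarrow> bool" where
  "bruhat_le R \<Delta> = (bruhat_step R \<Delta>)\<^sup>*\<^sup>*"

definition coset :: "'a::euclidean_space set \<Rightarrow> ('a \<Rightarrow> 'a) \<Rightarrow> ('a \<Rightarrow> 'a) set" where
  "coset J w = (\<lambda>u. w \<circ> u) ` refl_group J"

definition quot :: "'a::euclidean_space set \<Rightarrow> 'a set \<Rightarrow> ('a \<Rightarrow> 'a) set set" where
  "quot \<Delta> J = coset J ` refl_group \<Delta>"

definition min_rep :: "'a::euclidean_space set \<Rightarrow> ('a \<Rightarrow> 'a) set \<Rightarrow> ('a \<Rightarrow> 'a) \<Rightarrow> bool" where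
  "min_rep \<Delta> C c \<longleftrightarrow> c \<in> C \<and> (\<forall>c'\<in>C. wlen \<Delta> c \<le> wlen \<Delta> c')"

definition quot_le :: "'a::euclidean_space set \<Rightarrow> 'a set \<Rightarrow> ('a \<Rightarrow> 'a) set \<Rightarrow> ('a \<Rightarrow> 'a) set \<Rightarrow> bool" where
  "quot_le R \<Delta> C D \<longleftrightarrow> (\<exists>c d. min_rep \<Delta> C c \<and> min_rep \<Delta> D d \<and> bruhat_le R \<Delta> c d)"

definition quot_less :: "'a::euclidean_space set \<Rightarrow> 'a set \<Rightarrow> ('a \<Rightarrow> 'a) set \<Rightarrow> ('a \<Rightarrow> 'a) set \<Rightarrow> bool" where
  "quot_less R \<Delta> C D \<longleftrightarrow> quot_le R \<Delta> C D \<and> C \<noteq> D"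

definition quot_covers :: "'a::euclidean_space set \<Rightarrow> 'a set \<Rightarrow> 'a set \<Rightarrow> ('a \<Rightarrow> 'a) set \<Rightarrow> ('a \<Rightarrow> 'a) set \<Rightarrow> bool" where
  "quot_covers R \<Delta> J D C \<longleftrightarrow> C \<in> quot \<Delta> J \<and> D \<in> quot \<Delta> J \<and> quot_less R \<Delta> C D
     \<and> \<not> (\<exists>E\<in>quot \<Delta> J. quot_less R \<Delta> C E \<and> quot_less R \<Delta> E D)"

definition proj :: "'a::euclidean_space set \<Rightarrow> ('a \<Rightarrow> 'a) set \<Rightarrow> ('a \<Rightarrow> 'a) set" where
  "proj JP C = (\<Union>w\<in>C. coset JP w)"

end

theory Submission
  imports Defs
begin

text \<open>
  Each coset in \<open>W/W\<^sub>J\<close> has a unique element of minimal length, namely its element mapping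
  \<open>J\<close> to positive roots; the order on \<open>W/W\<^sub>J\<close> is the Bruhat order on these representatives,
  covers are pairs of representatives differing in length by one, and the projection to minimal
  representatives is monotone (by Deodhar's lifting property).

  Let \<open>c \<le> d\<close> be the representatives of \<open>\<phi> < \<theta>\<close>; they lie in different \<open>W\<^sub>P\<close>-cosets.
  The \<open>W\<^sub>P\<close>-representative of \<open>d\<close> is then not the identity, so some simple reflection \<open>s\<close>
  shortens \<open>d\<close> and changes its \<open>W\<^sub>P\<close>-coset, and \<open>sd\<close> is a representative covered by \<open>d\<close>.
  If \<open>c \<le> sd\<close> we are done. Otherwise lifting gives \<open>sc < c\<close> and \<open>sc \<le> sd\<close>; induction on the
  length of \<open>d\<close> provides \<open>v\<close> covered by \<open>sd\<close>, above \<open>sc\<close> and outside the \<open>W\<^sub>P\<close>-coset of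
  \<open>sd\<close>, and lifting once more shows that either \<open>c \<le> v \<le> sd\<close> or \<open>sv\<close> is the required element.
\<close>

section \<open>Reflections, reflection groups and cosets\<close>

lemma linear_refl: "linear (refl a)"
  unfolding refl_def
  by (intro linearI) (auto simp: algebra_simps add_divide_distrib)

lemma refl_inner: "refl a x \<bullet> refl a y = x \<bullet> y"
  by (cases "a = 0") (auto simp: refl_def inner_diff_left inner_diff_right field_simps inner_commute)

lemma orthogonal_transformation_refl: "orthogonal_transformation (refl a)"
  by (simp add: orthogonal_transformation_def linear_refl refl_inner)

lemma refl_refl [simp]: "refl a (refl a v) = v"
  by (cases "a = 0") (auto simp: refl_def inner_diff_left field_simps)

lemma refl_comp_refl_comp [simp]: "refl a \<circ> (refl a \<circ> f) = f"
  by auto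

lemma comp_refl_comp_refl [simp]: "(f \<circ> refl a) \<circ> refl a = f"
  by auto

lemma refl_self: "refl a a = - a"
  by (cases "a = 0") (auto simp: refl_def scaleR_2)

lemma refl_uminus: "refl (- a) = refl a"
  by (auto simp: refl_def fun_eq_iff)

lemma refl_conjugate:
  assumes "orthogonal_transformation f" shows "refl (f a) \<circ> f = f \<circ> refl a"
  using assms unfolding orthogonal_transformation_def refl_def fun_eq_iff
  by (auto simp: linear_diff linear_cmul)

definition refl_word :: "'a::euclidean_space list \<Rightarrow> 'a \<Rightarrow> 'a" where
  "refl_word xs = foldr (\<lambda>\<alpha> f. refl \<alpha> \<circ> f) xs id"

lemma refl_word_Nil [simp]: "refl_word [] = id"
  by (simp add: refl_word_def)

lemma refl_word_Cons [simp]: "refl_word (a # xs) = refl a \<circ> refl_word xs"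
  by (simp add: refl_word_def)

lemma refl_word_append: "refl_word (xs @ ys) = refl_word xs \<circ> refl_word ys"
  by (induction xs) (auto simp: comp_assoc)

lemma refl_word_in_refl_group: "set xs \<subseteq> J \<Longrightarrow> refl_word xs \<in> refl_group J"
  by (induction xs) (auto intro: refl_group.intros)

lemma refl_group_word: "w \<in> refl_group J \<Longrightarrow> \<exists>xs. set xs \<subseteq> J \<and> w = refl_word xs"
proof (induction rule: refl_group.induct)
  case id_in
  show ?case by (intro exI[of _ "[]"]) simp
next
  case (step w a)
  then obtain xs where "set xs \<subseteq> J" "w = refl_word xs" by blast
  with step show ?case by (intro exI[of _ "a # xs"]) simp
qed

lemma refl_group_comp: "v \<in> refl_group J \<Longrightarrow> w \<in> refl_group J \<Longrightarrow> v \<circ> w \<in> refl_group J"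
  by (metis refl_group_word refl_word_in_refl_group refl_word_append set_append Un_subset_iff)

lemma refl_in_refl_group: "a \<in> J \<Longrightarrow> refl a \<in> refl_group J"
  using refl_word_in_refl_group[of "[a]" J] by simp

lemma refl_group_mono: "J \<subseteq> K \<Longrightarrow> w \<in> refl_group J \<Longrightarrow> w \<in> refl_group K"
  by (metis refl_group_word refl_word_in_refl_group order_trans)

lemma refl_word_rev: "refl_word (rev xs) \<circ> refl_word xs = id"
proof (induction xs)
  case (Cons a xs)
  have "refl_word (rev (a # xs)) \<circ> refl_word (a # xs)
      = refl_word (rev xs) \<circ> (refl a \<circ> (refl a \<circ> refl_word xs))"
    by (simp only: rev.simps refl_word_append refl_word_Cons refl_word_Nil comp_assoc comp_id)
  also have "\<dots> = id"
    by (simp only: refl_comp_refl_comp Cons.IH)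
  finally show ?case .
qed simp

lemma refl_group_inverse:
  assumes "w \<in> refl_group J" shows "\<exists>w'\<in>refl_group J. w' \<circ> w = id \<and> w \<circ> w' = id"
proof -
  obtain xs where xs: "set xs \<subseteq> J" "w = refl_word xs"
    using refl_group_word assms by blast
  show ?thesis
    using xs refl_word_rev[of xs] refl_word_rev[of "rev xs"] refl_word_in_refl_group[of "rev xs" J]
    by (intro bexI[of _ "refl_word (rev xs)"]) auto
qed

lemma orthogonal_transformation_refl_group:
  "w \<in> refl_group J \<Longrightarrow> orthogonal_transformation w"
proof (induction rule: refl_group.induct)
  case (step w \<alpha>)
  show ?case
    by (rule orthogonal_transformation_compose[OF orthogonal_transformation_refl step.IH])
qed (simp add: id_def)

lemma coset_self: "w \<in> coset J w"
  unfolding coset_def by (rule image_eqI[of _ _ id]) (auto intro: refl_group.id_in)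

lemma coset_elem: "v \<in> coset J w \<Longrightarrow> \<exists>y\<in>refl_group J. v = w \<circ> y"
  unfolding coset_def by blast

lemma coset_subset_refl_group:
  "J \<subseteq> K \<Longrightarrow> w \<in> refl_group K \<Longrightarrow> coset J w \<subseteq> refl_group K"
  unfolding coset_def using refl_group_comp refl_group_mono by blast

lemma coset_comp:
  assumes "y \<in> refl_group J" shows "coset J (w \<circ> y) = coset J w"
proof (intro equalityI subsetI)
  fix f assume "f \<in> coset J (w \<circ> y)"
  then obtain u where "u \<in> refl_group J" "f = w \<circ> (y \<circ> u)"
    unfolding coset_def by (auto simp: comp_assoc)
  then show "f \<in> coset J w"
    unfolding coset_def using refl_group_comp[OF assms] by blast
next
  fix f assume "f \<in> coset J w"
  then obtain u where u: "u \<in> refl_group J" "f = w \<circ> u"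
    unfolding coset_def by blast
  obtain y' where y': "y' \<in> refl_group J" "y \<circ> y' = id"
    using refl_group_inverse[OF assms] by blast
  have "f = (w \<circ> y) \<circ> (y' \<circ> u)"
    using u(2) y'(2) by (metis comp_assoc id_comp)
  then show "f \<in> coset J (w \<circ> y)"
    unfolding coset_def using refl_group_comp[OF y'(1) u(1)] by blast
qed

lemma coset_eq: "v \<in> coset J w \<Longrightarrow> coset J v = coset J w"
  using coset_elem coset_comp by metis

lemma coset_refl_comp_cancel:
  "coset J (refl a \<circ> u) = coset J (refl a \<circ> w) \<longleftrightarrow> coset J u = coset J w"
proof -
  have lcomp: "coset J (g \<circ> w) = (\<lambda>f. g \<circ> f) ` coset J w" for g w
    unfolding coset_def by (simp add: image_image comp_assoc)
  show ?thesis
    by (metis lcomp refl_comp_refl_comp)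
qed

lemma proj_coset: assumes "J \<subseteq> K" shows "proj K (coset J w) = coset K w"
proof -
  have "coset K v = coset K w" if "v \<in> coset J w" for v
    using that coset_elem coset_comp refl_group_mono[OF assms] by metis
  then show ?thesis
    unfolding proj_def using coset_self[of w J] by blast
qed

section \<open>Root systems and positive roots\<close>

locale root_base =
  fixes R \<Delta> :: "'a::euclidean_space set"
  assumes root_system: "root_system R" and base: "is_base R \<Delta>"
begin

lemma finite_roots: "finite R"
  and zero_not_root: "0 \<notin> R"
  and refl_image_roots: "\<alpha> \<in> R \<Longrightarrow> refl \<alpha> ` R = R"
  and root_multiple: "\<alpha> \<in> R \<Longrightarrow> c *\<^sub>R \<alpha> \<in> R \<Longrightarrow> c = 1 \<or> c = -1"
  using root_system unfolding root_system_def by blast+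

lemma base_subset_roots: "\<Delta> \<subseteq> R"
  and independent_base: "independent \<Delta>"
  and root_base_expansion: "\<beta> \<in> R \<Longrightarrow> \<exists>c. \<beta> = (\<Sum>\<alpha>\<in>\<Delta>. c \<alpha> *\<^sub>R \<alpha>)
                                   \<and> ((\<forall>\<alpha>\<in>\<Delta>. c \<alpha> \<ge> 0) \<or> (\<forall>\<alpha>\<in>\<Delta>. c \<alpha> \<le> 0))"
  using base unfolding is_base_def by blast+

lemma finite_base: "finite \<Delta>"
  using finite_roots base_subset_roots finite_subset by blast

lemma refl_root: "\<alpha> \<in> R \<Longrightarrow> \<beta> \<in> R \<Longrightarrow> refl \<alpha> \<beta> \<in> R"
  using refl_image_roots by blast

lemma uminus_root: "\<beta> \<in> R \<Longrightarrow> - \<beta> \<in> R"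
  using refl_root[of \<beta> \<beta>] by (simp add: refl_self)

lemma base_coeffs_unique:
  assumes "(\<Sum>\<alpha>\<in>\<Delta>. c \<alpha> *\<^sub>R \<alpha>) = (\<Sum>\<alpha>\<in>\<Delta>. d \<alpha> *\<^sub>R \<alpha>)" "\<alpha> \<in> \<Delta>"
  shows "c \<alpha> = d \<alpha>"
proof -
  have "(\<Sum>\<alpha>\<in>\<Delta>. (c \<alpha> - d \<alpha>) *\<^sub>R \<alpha>) = 0"
    using assms(1) by (simp add: scaleR_diff_left sum_subtractf)
  then have "dependent \<Delta>" if "c \<alpha> \<noteq> d \<alpha>"
    unfolding dependent_finite[OF finite_base] using that assms(2)
    by (intro exI[of _ "\<lambda>\<alpha>. c \<alpha> - d \<alpha>"]) auto
  then show ?thesis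
    using independent_base by blast
qed

lemma sum_base_delta: "\<alpha> \<in> \<Delta> \<Longrightarrow> (\<Sum>\<gamma>\<in>\<Delta>. (if \<gamma> = \<alpha> then k else 0) *\<^sub>R \<gamma>) = k *\<^sub>R \<alpha>"
  using finite_base by (simp add: if_distrib[of "\<lambda>c. c *\<^sub>R _"] cong: if_cong)

definition pos_cone :: "'a \<Rightarrow> bool" where
  "pos_cone v \<longleftrightarrow> (\<exists>c. v = (\<Sum>\<alpha>\<in>\<Delta>. c \<alpha> *\<^sub>R \<alpha>) \<and> (\<forall>\<alpha>\<in>\<Delta>. 0 \<le> c \<alpha>))"

definition pos_root :: "'a \<Rightarrow> bool" where
  "pos_root \<beta> \<longleftrightarrow> \<beta> \<in> R \<and> pos_cone \<beta>"

lemma pos_cone_zero: "pos_cone 0"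
  unfolding pos_cone_def by (intro exI[of _ "\<lambda>_. 0"]) simp

lemma pos_cone_add: assumes "pos_cone v" "pos_cone w" shows "pos_cone (v + w)"
proof -
  obtain c d where "v = (\<Sum>\<alpha>\<in>\<Delta>. c \<alpha> *\<^sub>R \<alpha>)" "\<forall>\<alpha>\<in>\<Delta>. 0 \<le> c \<alpha>"
    and "w = (\<Sum>\<alpha>\<in>\<Delta>. d \<alpha> *\<^sub>R \<alpha>)" "\<forall>\<alpha>\<in>\<Delta>. 0 \<le> d \<alpha>"
    using assms unfolding pos_cone_def by blast
  then show ?thesis
    unfolding pos_cone_def
    by (intro exI[of _ "\<lambda>\<alpha>. c \<alpha> + d \<alpha>"]) (simp add: scaleR_add_left sum.distrib)
qed

lemma pos_cone_scaleR: assumes "0 \<le> t" "pos_cone v" shows "pos_cone (t *\<^sub>R v)"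
proof -
  obtain c where "v = (\<Sum>\<alpha>\<in>\<Delta>. c \<alpha> *\<^sub>R \<alpha>)" "\<forall>\<alpha>\<in>\<Delta>. 0 \<le> c \<alpha>"
    using assms(2) unfolding pos_cone_def by blast
  with assms(1) show ?thesis
    unfolding pos_cone_def
    by (intro exI[of _ "\<lambda>\<alpha>. t * c \<alpha>"]) (simp add: scaleR_sum_right)
qed

lemma pos_cone_sum: "finite S \<Longrightarrow> \<forall>i\<in>S. pos_cone (f i) \<Longrightarrow> pos_cone (\<Sum>i\<in>S. f i)"
  by (induction S rule: finite_induct) (auto intro: pos_cone_zero pos_cone_add)

lemma pos_cone_base: "\<alpha> \<in> \<Delta> \<Longrightarrow> pos_cone \<alpha>"
  unfolding pos_cone_def using sum_base_delta[of \<alpha> 1]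
  by (intro exI[of _ "\<lambda>\<gamma>. if \<gamma> = \<alpha> then 1 else 0"]) auto

lemma pos_cone_antisym: assumes "pos_cone v" "pos_cone (- v)" shows "v = 0"
proof -
  obtain c d where c: "v = (\<Sum>\<alpha>\<in>\<Delta>. c \<alpha> *\<^sub>R \<alpha>)" "\<forall>\<alpha>\<in>\<Delta>. 0 \<le> c \<alpha>"
    and d: "- v = (\<Sum>\<alpha>\<in>\<Delta>. d \<alpha> *\<^sub>R \<alpha>)" "\<forall>\<alpha>\<in>\<Delta>. 0 \<le> d \<alpha>"
    using assms unfolding pos_cone_def by blast
  have "(\<Sum>\<alpha>\<in>\<Delta>. (c \<alpha> + d \<alpha>) *\<^sub>R \<alpha>) = v + - v"
    unfolding scaleR_add_left sum.distrib using c(1) d(1) by simp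
  also have "\<dots> = (\<Sum>\<alpha>\<in>\<Delta>. 0 *\<^sub>R \<alpha>)"
    by simp
  finally have "c \<alpha> + d \<alpha> = 0" if "\<alpha> \<in> \<Delta>" for \<alpha>
    using base_coeffs_unique[of "\<lambda>\<alpha>. c \<alpha> + d \<alpha>" "\<lambda>_. 0"] that by simp
  then have "c \<alpha> = 0" if "\<alpha> \<in> \<Delta>" for \<alpha>
    using that c(2) d(2) by (metis add_nonneg_eq_0_iff)
  then show ?thesis
    using c(1) by simp
qed

lemma pos_root_in_roots: "pos_root \<beta> \<Longrightarrow> \<beta> \<in> R"
  by (simp add: pos_root_def)

lemma pos_root_base: "\<alpha> \<in> \<Delta> \<Longrightarrow> pos_root \<alpha>"
  using pos_cone_base base_subset_roots by (auto simp: pos_root_def)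

lemma pos_root_or_uminus: assumes "\<beta> \<in> R" shows "pos_root \<beta> \<or> pos_root (- \<beta>)"
proof -
  obtain c where c: "\<beta> = (\<Sum>\<alpha>\<in>\<Delta>. c \<alpha> *\<^sub>R \<alpha>)" "(\<forall>\<alpha>\<in>\<Delta>. c \<alpha> \<ge> 0) \<or> (\<forall>\<alpha>\<in>\<Delta>. c \<alpha> \<le> 0)"
    using root_base_expansion[OF assms] by blast
  from c(2) show ?thesis
  proof
    assume "\<forall>\<alpha>\<in>\<Delta>. c \<alpha> \<ge> 0"
    with c(1) assms show ?thesis
      unfolding pos_root_def pos_cone_def by blast
  next
    assume "\<forall>\<alpha>\<in>\<Delta>. c \<alpha> \<le> 0"
    moreover have "- \<beta> = (\<Sum>\<alpha>\<in>\<Delta>. (- c \<alpha>) *\<^sub>R \<alpha>)"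
      using c(1) by (simp add: sum_negf)
    ultimately have "pos_cone (- \<beta>)"
      unfolding pos_cone_def by (intro exI[of _ "\<lambda>\<alpha>. - c \<alpha>"]) simp
    with assms uminus_root show ?thesis
      by (simp add: pos_root_def)
  qed
qed

lemma not_pos_root_uminus: "pos_root \<beta> \<Longrightarrow> \<not> pos_root (- \<beta>)"
  unfolding pos_root_def using pos_cone_antisym zero_not_root by blast

lemma exists_pos_root_same_refl: "\<beta> \<in> R \<Longrightarrow> \<exists>\<gamma>. pos_root \<gamma> \<and> refl \<gamma> = refl \<beta>"
  using pos_root_or_uminus refl_uminus by blast

lemma pos_root_refl_simple:
  assumes \<alpha>: "\<alpha> \<in> \<Delta>" and \<beta>: "pos_root \<beta>" and ne: "\<beta> \<noteq> \<alpha>"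
  shows "pos_root (refl \<alpha> \<beta>)"
proof (rule ccontr)
  \<comment> \<open>\<open>\<beta> - refl \<alpha> \<beta>\<close> is a multiple of \<open>\<alpha>\<close>; if \<open>refl \<alpha> \<beta>\<close> were negative, comparing coefficients
     would make \<open>\<beta>\<close> a nonnegative multiple of \<open>\<alpha>\<close>, hence \<open>\<beta> = \<alpha>\<close> as the root system is reduced.\<close>
  assume "\<not> pos_root (refl \<alpha> \<beta>)"
  moreover have "refl \<alpha> \<beta> \<in> R"
    using \<alpha> \<beta> base_subset_roots refl_root pos_root_in_roots by blast
  ultimately have "pos_cone (- refl \<alpha> \<beta>)"
    using pos_root_or_uminus pos_root_def by blast
  then obtain d where d: "- refl \<alpha> \<beta> = (\<Sum>\<gamma>\<in>\<Delta>. d \<gamma> *\<^sub>R \<gamma>)" "\<forall>\<gamma>\<in>\<Delta>. 0 \<le> d \<gamma>"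
    unfolding pos_cone_def by blast
  obtain c where c: "\<beta> = (\<Sum>\<gamma>\<in>\<Delta>. c \<gamma> *\<^sub>R \<gamma>)" "\<forall>\<gamma>\<in>\<Delta>. 0 \<le> c \<gamma>"
    using \<beta> unfolding pos_root_def pos_cone_def by blast
  define k where "k = 2 * (\<beta> \<bullet> \<alpha>) / (\<alpha> \<bullet> \<alpha>)"
  have "(\<Sum>\<gamma>\<in>\<Delta>. (c \<gamma> + d \<gamma>) *\<^sub>R \<gamma>) = \<beta> + - refl \<alpha> \<beta>"
    unfolding scaleR_add_left sum.distrib using c(1) d(1) by simp
  also have "\<dots> = k *\<^sub>R \<alpha>"
    by (simp add: refl_def k_def)
  also have "\<dots> = (\<Sum>\<gamma>\<in>\<Delta>. (if \<gamma> = \<alpha> then k else 0) *\<^sub>R \<gamma>)"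
    using sum_base_delta[OF \<alpha>] by simp
  finally have "c \<gamma> + d \<gamma> = 0" if "\<gamma> \<in> \<Delta>" "\<gamma> \<noteq> \<alpha>" for \<gamma>
    using base_coeffs_unique[of "\<lambda>\<gamma>. c \<gamma> + d \<gamma>" _ \<gamma>] that by simp
  then have "c \<gamma> = 0" if "\<gamma> \<in> \<Delta>" "\<gamma> \<noteq> \<alpha>" for \<gamma>
    using that c(2) d(2) by (metis add_nonneg_eq_0_iff)
  then have "(\<Sum>\<gamma>\<in>\<Delta>. c \<gamma> *\<^sub>R \<gamma>) = (\<Sum>\<gamma>\<in>\<Delta>. (if \<gamma> = \<alpha> then c \<alpha> else 0) *\<^sub>R \<gamma>)"
    by (intro sum.cong) auto
  then have \<beta>_eq: "\<beta> = c \<alpha> *\<^sub>R \<alpha>"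
    using c(1) sum_base_delta[OF \<alpha>] by simp
  have "c \<alpha> *\<^sub>R \<alpha> \<in> R"
    using \<beta> \<beta>_eq pos_root_in_roots by metis
  then have "c \<alpha> = 1 \<or> c \<alpha> = -1"
    using root_multiple \<alpha> base_subset_roots by blast
  moreover have "0 \<le> c \<alpha>"
    using c(2) \<alpha> by blast
  ultimately show False
    using \<beta>_eq ne by auto
qed

section \<open>Length and the exchange property\<close>

abbreviation W :: "('a \<Rightarrow> 'a) set" where
  "W \<equiv> refl_group \<Delta>"

abbreviation len :: "('a \<Rightarrow> 'a) \<Rightarrow> nat" where
  "len \<equiv> wlen \<Delta>"

lemma W_image_roots: "w \<in> W \<Longrightarrow> w ` R = R"
proof (induction rule: refl_group.induct)
  case (step w \<alpha>)
  have "(refl \<alpha> \<circ> w) ` R = refl \<alpha> ` (w ` R)"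
    by (rule image_comp[symmetric])
  also have "\<dots> = R"
    using step refl_image_roots base_subset_roots by auto
  finally show ?case .
qed simp

lemma W_root: "w \<in> W \<Longrightarrow> \<beta> \<in> R \<Longrightarrow> w \<beta> \<in> R"
  using W_image_roots by blast

lemma W_uminus: "w \<in> W \<Longrightarrow> w (- \<beta>) = - w \<beta>"
  using orthogonal_transformation_refl_group orthogonal_transformation_linear linear_neg by blast

lemma refl_comp_W: "\<alpha> \<in> \<Delta> \<Longrightarrow> w \<in> W \<Longrightarrow> refl \<alpha> \<circ> w \<in> W"
  and W_comp_refl: "\<alpha> \<in> \<Delta> \<Longrightarrow> w \<in> W \<Longrightarrow> w \<circ> refl \<alpha> \<in> W"
  using refl_group_comp refl_in_refl_group by blast+

lemma refl_comp_eq_comp_refl: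
  assumes "\<alpha> \<in> R" "w \<in> W" shows "\<exists>\<gamma>\<in>R. refl \<alpha> \<circ> w = w \<circ> refl \<gamma>"
proof -
  obtain \<gamma> where "\<gamma> \<in> R" "\<alpha> = w \<gamma>"
    using W_image_roots[OF assms(2)] assms(1) by blast
  then show ?thesis
    using refl_conjugate[OF orthogonal_transformation_refl_group[OF assms(2)]] by blast
qed

lemma wlen_word: assumes "w \<in> W" shows "\<exists>xs. length xs = len w \<and> set xs \<subseteq> \<Delta> \<and> w = refl_word xs"
proof -
  have "\<exists>n xs. length xs = n \<and> set xs \<subseteq> \<Delta> \<and> w = refl_word xs"
    using refl_group_word[OF assms] by blast
  from LeastI_ex[OF this] show ?thesis
    unfolding wlen_def refl_word_def by blast
qed

lemma wlen_le_length: "set xs \<subseteq> \<Delta> \<Longrightarrow> len (refl_word xs) \<le> length xs"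
  unfolding wlen_def refl_word_def by (rule Least_le) blast

lemma wlen_id [simp]: "len id = 0"
  using wlen_le_length[of "[]"] by simp

lemma wlen_eq_0: "w \<in> W \<Longrightarrow> len w = 0 \<Longrightarrow> w = id"
  using wlen_word by fastforce

lemma wlen_comp_le: assumes "v \<in> W" "w \<in> W" shows "len (v \<circ> w) \<le> len v + len w"
proof -
  obtain xs ys where "length xs = len v" "set xs \<subseteq> \<Delta>" "v = refl_word xs"
    and "length ys = len w" "set ys \<subseteq> \<Delta>" "w = refl_word ys"
    using wlen_word assms by metis
  then show ?thesis
    using wlen_le_length[of "xs @ ys"] by (simp add: refl_word_append)
qed

lemma wlen_refl_le: "\<alpha> \<in> \<Delta> \<Longrightarrow> len (refl \<alpha>) \<le> 1"
  using wlen_le_length[of "[\<alpha>]"] by simp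

lemma exists_left_descent:
  assumes "w \<in> W" "w \<noteq> id" shows "\<exists>\<alpha>\<in>\<Delta>. len (refl \<alpha> \<circ> w) < len w"
proof -
  obtain xs where xs: "length xs = len w" "set xs \<subseteq> \<Delta>" "w = refl_word xs"
    using wlen_word assms(1) by blast
  with assms(2) obtain \<alpha> ys where "xs = \<alpha> # ys"
    by (cases xs) auto
  with xs have "\<alpha> \<in> \<Delta>" "len (refl \<alpha> \<circ> w) \<le> length ys" "length ys < len w"
    using wlen_le_length[of ys] by auto
  then show ?thesis
    by (meson le_less_trans)
qed

lemma refl_word_exchange:
  assumes "set xs \<subseteq> \<Delta>" "pos_root \<beta>" "\<not> pos_root (refl_word xs \<beta>)"
  shows "\<exists>ys. set ys \<subseteq> set xs \<and> length ys < length xs \<and> refl_word ys = refl_word xs \<circ> refl \<beta>"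
  using assms
proof (induction xs)
  case Nil
  then show ?case by simp
next
  case (Cons \<alpha> xs)
  then have \<alpha>: "\<alpha> \<in> \<Delta>" and xs: "set xs \<subseteq> \<Delta>"
    by auto
  show ?case
  proof (cases "pos_root (refl_word xs \<beta>)")
    case False
    then obtain ys where "set ys \<subseteq> set xs" "length ys < length xs" "refl_word ys = refl_word xs \<circ> refl \<beta>"
      using Cons.IH xs Cons.prems(2) by blast
    then show ?thesis
      by (intro exI[of _ "\<alpha> # ys"]) (auto simp: comp_assoc)
  next
    case True
    then have "refl_word xs \<beta> = \<alpha>"
      using pos_root_refl_simple[OF \<alpha>] Cons.prems(3) by auto
    then have "refl \<alpha> \<circ> refl_word xs = refl_word xs \<circ> refl \<beta>"
      using refl_conjugate[OF orthogonal_transformation_refl_group[OF refl_word_in_refl_group[OF xs]]]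
      by metis
    then have "refl_word xs = refl_word (\<alpha> # xs) \<circ> refl \<beta>"
      by (simp only: refl_word_Cons comp_refl_comp_refl)
    moreover have "set xs \<subseteq> set (\<alpha> # xs)" "length xs < length (\<alpha> # xs)"
      by auto
    ultimately show ?thesis
      by blast
  qed
qed

lemma wlen_comp_refl_less:
  assumes "w \<in> W" "pos_root \<beta>" "\<not> pos_root (w \<beta>)"
  shows "w \<circ> refl \<beta> \<in> W" "len (w \<circ> refl \<beta>) < len w"
proof -
  obtain xs where xs: "length xs = len w" "set xs \<subseteq> \<Delta>" "w = refl_word xs"
    using wlen_word assms(1) by blast
  then obtain ys where "set ys \<subseteq> set xs" "length ys < length xs" "refl_word ys = w \<circ> refl \<beta>"
    using refl_word_exchange assms by blast
  with xs show "w \<circ> refl \<beta> \<in> W" "len (w \<circ> refl \<beta>) < len w"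
    using wlen_le_length[of ys] refl_word_in_refl_group[of ys \<Delta>] by force+
qed

text \<open>The hypothesis \<open>w \<circ> refl \<beta> \<in> W\<close> is needed: we never prove that reflections in
  non-simple roots belong to \<open>W\<close>.\<close>
lemma wlen_less_comp_refl:
  assumes "w \<in> W" "w \<circ> refl \<beta> \<in> W" "pos_root \<beta>" "pos_root (w \<beta>)"
  shows "len w < len (w \<circ> refl \<beta>)"
proof -
  have "(w \<circ> refl \<beta>) \<beta> = - w \<beta>"
    using W_uminus assms(1) by (simp add: refl_self)
  then have "\<not> pos_root ((w \<circ> refl \<beta>) \<beta>)"
    using not_pos_root_uminus assms(4) by simp
  from wlen_comp_refl_less(2)[OF assms(2,3) this] show ?thesis
    by (simp only: comp_refl_comp_refl)
qed

lemma wlen_less_comp_refl_iff: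
  assumes "w \<in> W" "w \<circ> refl \<beta> \<in> W" "pos_root \<beta>"
  shows "len w < len (w \<circ> refl \<beta>) \<longleftrightarrow> pos_root (w \<beta>)"
  using wlen_less_comp_refl[OF assms] wlen_comp_refl_less[OF assms(1,3)] by fastforce

lemma wlen_comp_refl_neq:
  assumes "w \<in> W" "w \<circ> refl \<beta> \<in> W" "\<beta> \<in> R" shows "len (w \<circ> refl \<beta>) \<noteq> len w"
proof -
  obtain \<gamma> where \<gamma>: "pos_root \<gamma>" "refl \<gamma> = refl \<beta>"
    using exists_pos_root_same_refl assms(3) by blast
  then show ?thesis
    using wlen_less_comp_refl_iff[of w \<gamma>] wlen_comp_refl_less(2)[of w \<gamma>] assms(1,2) by fastforce
qed

lemma wlen_refl_comp:
  assumes "\<alpha> \<in> \<Delta>" "w \<in> W" shows "len (refl \<alpha> \<circ> w) = len w + 1 \<or> len (refl \<alpha> \<circ> w) + 1 = len w"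
proof -
  obtain \<gamma> where "\<gamma> \<in> R" "refl \<alpha> \<circ> w = w \<circ> refl \<gamma>"
    using refl_comp_eq_comp_refl assms base_subset_roots by blast
  then have "len (refl \<alpha> \<circ> w) \<noteq> len w"
    using wlen_comp_refl_neq[of w \<gamma>] assms refl_comp_W by metis
  moreover have "len (refl \<alpha> \<circ> w) \<le> len w + 1"
    using wlen_comp_le[of "refl \<alpha>" w] wlen_refl_le assms refl_in_refl_group by fastforce
  moreover have "len w \<le> len (refl \<alpha> \<circ> w) + 1"
    using wlen_comp_le[of "refl \<alpha>" "refl \<alpha> \<circ> w"] wlen_refl_le assms refl_in_refl_group refl_comp_W
    by fastforce
  ultimately show ?thesis
    by linarith
qed

lemma wlen_comp_refl:
  assumes "\<alpha> \<in> \<Delta>" "w \<in> W" shows "len (w \<circ> refl \<alpha>) = len w + 1 \<or> len (w \<circ> refl \<alpha>) + 1 = len w"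
proof -
  have "len (w \<circ> refl \<alpha>) \<noteq> len w"
    using wlen_comp_refl_neq assms W_comp_refl base_subset_roots by blast
  moreover have "len (w \<circ> refl \<alpha>) \<le> len w + 1"
    using wlen_comp_le[of w "refl \<alpha>"] wlen_refl_le assms refl_in_refl_group by fastforce
  moreover have "len w \<le> len (w \<circ> refl \<alpha>) + 1"
    using wlen_comp_le[of "w \<circ> refl \<alpha>" "refl \<alpha>"] wlen_refl_le assms refl_in_refl_group W_comp_refl
    by fastforce
  ultimately show ?thesis
    by linarith
qed


section \<open>Bruhat order and the lifting property\<close>

abbreviation bruhat :: "('a \<Rightarrow> 'a) \<Rightarrow> ('a \<Rightarrow> 'a) \<Rightarrow> bool" (infix "\<preceq>" 50) where
  "u \<preceq> v \<equiv> bruhat_le R \<Delta> u v"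

lemma bruhat_le_refl [simp]: "u \<preceq> u"
  by (simp add: bruhat_le_def)

lemma bruhat_le_trans: "u \<preceq> v \<Longrightarrow> v \<preceq> w \<Longrightarrow> u \<preceq> w"
  by (simp add: bruhat_le_def)

lemma bruhat_step_le: "bruhat_step R \<Delta> u v \<Longrightarrow> u \<preceq> v"
  by (simp add: bruhat_le_def)

lemma bruhat_step_wlen: "bruhat_step R \<Delta> u v \<Longrightarrow> len u < len v"
  by (auto simp: bruhat_step_def)

lemma bruhat_le_wlen: "u \<preceq> v \<Longrightarrow> u = v \<or> len u < len v"
  unfolding bruhat_le_def
  by (induction rule: rtranclp_induct) (auto dest: bruhat_step_wlen)

lemma bruhat_le_W: "u \<preceq> v \<Longrightarrow> v \<in> W \<Longrightarrow> u \<in> W"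
  unfolding bruhat_le_def
  by (induction rule: converse_rtranclp_induct) (auto simp: bruhat_step_def)

lemma bruhat_stepI: "u \<in> W \<Longrightarrow> \<beta> \<in> R \<Longrightarrow> len u < len (u \<circ> refl \<beta>) \<Longrightarrow> bruhat_step R \<Delta> u (u \<circ> refl \<beta>)"
  by (auto simp: bruhat_step_def)

lemma bruhat_le_refl_comp:
  assumes "\<alpha> \<in> \<Delta>" "w \<in> W" "len w < len (refl \<alpha> \<circ> w)" shows "w \<preceq> refl \<alpha> \<circ> w"
proof -
  obtain \<gamma> where "\<gamma> \<in> R" "refl \<alpha> \<circ> w = w \<circ> refl \<gamma>"
    using refl_comp_eq_comp_refl assms base_subset_roots by blast
  then show ?thesis
    using bruhat_stepI[of w \<gamma>] bruhat_step_le assms by simp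
qed

lemma refl_comp_bruhat_le:
  assumes "\<alpha> \<in> \<Delta>" "w \<in> W" "len (refl \<alpha> \<circ> w) < len w" shows "refl \<alpha> \<circ> w \<preceq> w"
  using bruhat_le_refl_comp[of \<alpha> "refl \<alpha> \<circ> w"] assms refl_comp_W by simp

lemma bruhat_le_comp_refl:
  "\<alpha> \<in> \<Delta> \<Longrightarrow> w \<in> W \<Longrightarrow> len w < len (w \<circ> refl \<alpha>) \<Longrightarrow> w \<preceq> w \<circ> refl \<alpha>"
  using bruhat_stepI bruhat_step_le base_subset_roots by blast

lemma bruhat_step_pos_root:
  assumes "bruhat_step R \<Delta> u v" "v \<in> W"
  shows "\<exists>\<beta>. pos_root \<beta> \<and> pos_root (u \<beta>) \<and> v = u \<circ> refl \<beta>"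
proof -
  obtain \<gamma> where \<gamma>: "u \<in> W" "\<gamma> \<in> R" "v = u \<circ> refl \<gamma>" "len u < len v"
    using assms(1) by (auto simp: bruhat_step_def)
  moreover obtain \<beta> where "pos_root \<beta>" "refl \<beta> = refl \<gamma>"
    using exists_pos_root_same_refl \<gamma>(2) by blast
  ultimately show ?thesis
    using wlen_less_comp_refl_iff[of u \<beta>] assms(2) by auto
qed

lemma bruhat_step_refl_comp:
  assumes "bruhat_step R \<Delta> u v" "v \<in> W" "\<alpha> \<in> \<Delta>"
  shows "refl \<alpha> \<circ> u = v \<or> bruhat_step R \<Delta> (refl \<alpha> \<circ> u) (refl \<alpha> \<circ> v)"
proof -
  obtain \<beta> where \<beta>: "pos_root \<beta>" "pos_root (u \<beta>)" "v = u \<circ> refl \<beta>"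
    using bruhat_step_pos_root assms by blast
  have u: "u \<in> W"
    using assms(1) by (simp add: bruhat_step_def)
  show ?thesis
  proof (cases "u \<beta> = \<alpha>")
    case True
    then show ?thesis
      using refl_conjugate[OF orthogonal_transformation_refl_group[OF u]] \<beta>(3) by metis
  next
    case False
    have v\<alpha>: "refl \<alpha> \<circ> v = (refl \<alpha> \<circ> u) \<circ> refl \<beta>"
      using \<beta>(3) by (simp add: comp_assoc)
    then have "(refl \<alpha> \<circ> u) \<circ> refl \<beta> \<in> W"
      using refl_comp_W[OF assms(3,2)] by simp
    from wlen_less_comp_refl[OF refl_comp_W[OF assms(3) u] this \<beta>(1)]
    have "len (refl \<alpha> \<circ> u) < len ((refl \<alpha> \<circ> u) \<circ> refl \<beta>)"
      using pos_root_refl_simple[OF assms(3) \<beta>(2) False] by simp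
    with v\<alpha> show ?thesis
      using bruhat_stepI pos_root_in_roots \<beta>(1) refl_comp_W assms(3) u by metis
  qed
qed

lemma bruhat_step_comp_refl:
  assumes "bruhat_step R \<Delta> u v" "v \<in> W" "\<alpha> \<in> \<Delta>"
  shows "u \<circ> refl \<alpha> = v \<or> bruhat_step R \<Delta> (u \<circ> refl \<alpha>) (v \<circ> refl \<alpha>)"
proof -
  obtain \<beta> where \<beta>: "pos_root \<beta>" "pos_root (u \<beta>)" "v = u \<circ> refl \<beta>"
    using bruhat_step_pos_root assms by blast
  have u: "u \<in> W"
    using assms(1) by (simp add: bruhat_step_def)
  show ?thesis
  proof (cases "\<beta> = \<alpha>")
    case True
    then show ?thesis
      using \<beta>(3) by simp
  next
    case False
    define \<beta>' where "\<beta>' = refl \<alpha> \<beta>"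
    have \<beta>': "pos_root \<beta>'" "(u \<circ> refl \<alpha>) \<beta>' = u \<beta>"
      using pos_root_refl_simple[OF assms(3) \<beta>(1) False] by (simp_all add: \<beta>'_def)
    have "refl \<beta> \<circ> refl \<alpha> = refl \<alpha> \<circ> refl \<beta>'"
      using refl_conjugate[OF orthogonal_transformation_refl, of \<alpha> \<beta>'] by (simp add: \<beta>'_def)
    then have v\<alpha>: "v \<circ> refl \<alpha> = (u \<circ> refl \<alpha>) \<circ> refl \<beta>'"
      using \<beta>(3) by (simp add: comp_assoc)
    then have "(u \<circ> refl \<alpha>) \<circ> refl \<beta>' \<in> W"
      using W_comp_refl[OF assms(3,2)] by simp
    from wlen_less_comp_refl[OF W_comp_refl[OF assms(3) u] this \<beta>'(1)]
    have "len (u \<circ> refl \<alpha>) < len ((u \<circ> refl \<alpha>) \<circ> refl \<beta>')"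
      using \<beta>' \<beta>(2) by simp
    with v\<alpha> show ?thesis
      using bruhat_stepI pos_root_in_roots \<beta>'(1) W_comp_refl assms(3) u by metis
  qed
qed

lemma bruhat_le_lifting:
  assumes "u \<preceq> w" "w \<in> W" "\<alpha> \<in> \<Delta>"
  shows "refl \<alpha> \<circ> u \<preceq> w \<or> refl \<alpha> \<circ> u \<preceq> refl \<alpha> \<circ> w"
  using assms(1) unfolding bruhat_le_def
proof (induction rule: converse_rtranclp_induct)
  case (step u v)
  have "v \<in> W"
    using bruhat_le_W step(2) assms(2) unfolding bruhat_le_def by blast
  from bruhat_step_refl_comp[OF step(1) this assms(3)] show ?case
  proof
    assume "refl \<alpha> \<circ> u = v"
    with step(2) show ?case
      by simp
  next
    assume "bruhat_step R \<Delta> (refl \<alpha> \<circ> u) (refl \<alpha> \<circ> v)"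
    with step(3) show ?case
      by (blast intro: converse_rtranclp_into_rtranclp)
  qed
qed simp

lemma bruhat_le_lifting_descent:
  assumes "u \<preceq> w" "w \<in> W" "\<alpha> \<in> \<Delta>" "len (refl \<alpha> \<circ> w) < len w"
  shows "u \<preceq> refl \<alpha> \<circ> w \<or> refl \<alpha> \<circ> u \<preceq> refl \<alpha> \<circ> w"
  using assms(1) unfolding bruhat_le_def
proof (induction rule: converse_rtranclp_induct)
  case (step u v)
  have "v \<in> W"
    using bruhat_le_W step(2) assms(2) unfolding bruhat_le_def by blast
  from step(3) show ?case
  proof
    assume le: "(bruhat_step R \<Delta>)\<^sup>*\<^sup>* (refl \<alpha> \<circ> v) (refl \<alpha> \<circ> w)"
    from bruhat_step_refl_comp[OF step(1) \<open>v \<in> W\<close> assms(3)] show ?case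
    proof
      assume "refl \<alpha> \<circ> u = v"
      then have "u = refl \<alpha> \<circ> v"
        by auto
      with le show ?case
        by (intro disjI1) (simp only:)
    qed (use le in \<open>blast intro: converse_rtranclp_into_rtranclp\<close>)
  qed (blast intro: converse_rtranclp_into_rtranclp step(1))
qed simp

lemma bruhat_le_lifting_descent_right:
  assumes "u \<preceq> w" "w \<in> W" "\<alpha> \<in> \<Delta>" "len (w \<circ> refl \<alpha>) < len w"
  shows "u \<preceq> w \<circ> refl \<alpha> \<or> u \<circ> refl \<alpha> \<preceq> w \<circ> refl \<alpha>"
  using assms(1) unfolding bruhat_le_def
proof (induction rule: converse_rtranclp_induct)
  case (step u v)
  have "v \<in> W"
    using bruhat_le_W step(2) assms(2) unfolding bruhat_le_def by blast
  from step(3) show ?case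
  proof
    assume le: "(bruhat_step R \<Delta>)\<^sup>*\<^sup>* (v \<circ> refl \<alpha>) (w \<circ> refl \<alpha>)"
    from bruhat_step_comp_refl[OF step(1) \<open>v \<in> W\<close> assms(3)] show ?case
    proof
      assume "u \<circ> refl \<alpha> = v"
      then have "u = v \<circ> refl \<alpha>"
        by auto
      with le show ?case
        by (intro disjI1) (simp only:)
    qed (use le in \<open>blast intro: converse_rtranclp_into_rtranclp\<close>)
  qed (blast intro: converse_rtranclp_into_rtranclp step(1))
qed simp

lemma bruhat_le_of_le_comp_refl:
  assumes "p \<preceq> w \<circ> refl \<alpha>" "w \<in> W" "\<alpha> \<in> \<Delta>"
    and "len p < len (p \<circ> refl \<alpha>)" "len w < len (w \<circ> refl \<alpha>)"
  shows "p \<preceq> w"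
proof -
  have "p \<preceq> w \<or> p \<circ> refl \<alpha> \<preceq> w"
    using bruhat_le_lifting_descent_right[OF assms(1) W_comp_refl[OF assms(3,2)] assms(3)] assms(5)
    by simp
  moreover have "p \<preceq> p \<circ> refl \<alpha>"
    using bruhat_le_comp_refl assms bruhat_le_W W_comp_refl by blast
  ultimately show ?thesis
    using bruhat_le_trans by blast
qed


section \<open>Minimal coset representatives\<close>

definition min_coset_reps :: "'a set \<Rightarrow> ('a \<Rightarrow> 'a) set" where
  "min_coset_reps J = {w \<in> W. \<forall>\<alpha>\<in>J. pos_root (w \<alpha>)}"

lemma min_coset_reps_W: "x \<in> min_coset_reps J \<Longrightarrow> x \<in> W"
  and min_coset_reps_pos_root: "x \<in> min_coset_reps J \<Longrightarrow> \<alpha> \<in> J \<Longrightarrow> pos_root (x \<alpha>)"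
  by (simp_all add: min_coset_reps_def)

lemma id_min_coset_reps: "J \<subseteq> \<Delta> \<Longrightarrow> id \<in> min_coset_reps J"
  using pos_root_base by (auto simp: min_coset_reps_def intro: refl_group.id_in)

lemma pos_root_span_expansion:
  assumes "J \<subseteq> \<Delta>" "pos_root \<gamma>" "\<gamma> \<in> span J"
  shows "\<exists>c. \<gamma> = (\<Sum>\<alpha>\<in>J. c \<alpha> *\<^sub>R \<alpha>) \<and> (\<forall>\<alpha>\<in>J. 0 \<le> c \<alpha>)"
proof -
  obtain c where c: "\<gamma> = (\<Sum>\<alpha>\<in>\<Delta>. c \<alpha> *\<^sub>R \<alpha>)" "\<forall>\<alpha>\<in>\<Delta>. 0 \<le> c \<alpha>"
    using assms(2) unfolding pos_root_def pos_cone_def by blast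
  have fin: "finite J"
    using assms(1) finite_base finite_subset by blast
  then obtain e where e: "\<gamma> = (\<Sum>\<alpha>\<in>J. e \<alpha> *\<^sub>R \<alpha>)"
    using assms(3) span_finite[OF fin] by blast
  define e' where "e' \<alpha> = (if \<alpha> \<in> J then e \<alpha> else 0)" for \<alpha>
  have "(\<Sum>\<alpha>\<in>\<Delta>. e' \<alpha> *\<^sub>R \<alpha>) = (\<Sum>\<alpha>\<in>J. e \<alpha> *\<^sub>R \<alpha>)"
    by (rule sum.mono_neutral_cong_right[OF finite_base assms(1)]) (auto simp: e'_def)
  with c(1) e have "c \<alpha> = e' \<alpha>" if "\<alpha> \<in> \<Delta>" for \<alpha>
    using base_coeffs_unique that by metis
  then show ?thesis
    using e c(2) assms(1) by (intro exI[of _ e]) (force simp: e'_def)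
qed

lemma min_coset_reps_pos_root_span:
  assumes "J \<subseteq> \<Delta>" "x \<in> min_coset_reps J" "pos_root \<gamma>" "\<gamma> \<in> span J"
  shows "pos_root (x \<gamma>)"
proof -
  obtain c where c: "\<gamma> = (\<Sum>\<alpha>\<in>J. c \<alpha> *\<^sub>R \<alpha>)" "\<forall>\<alpha>\<in>J. 0 \<le> c \<alpha>"
    using pos_root_span_expansion assms(1,3,4) by blast
  have x: "x \<in> W"
    using assms(2) min_coset_reps_W by blast
  have "x \<gamma> = (\<Sum>\<alpha>\<in>J. c \<alpha> *\<^sub>R x \<alpha>)"
    unfolding c(1) using orthogonal_transformation_refl_group[OF x]
    by (simp add: orthogonal_transformation_def linear_sum linear_cmul)
  moreover have "pos_cone (\<Sum>\<alpha>\<in>J. c \<alpha> *\<^sub>R x \<alpha>)"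
    using assms(1) finite_base finite_subset c(2) min_coset_reps_pos_root[OF assms(2)]
    by (intro pos_cone_sum) (auto intro: pos_cone_scaleR simp: pos_root_def)
  moreover have "x \<gamma> \<in> R"
    using W_root[OF x] pos_root_in_roots assms(3) by blast
  ultimately show ?thesis
    unfolding pos_root_def by simp
qed

lemma refl_word_span: "set ys \<subseteq> J \<Longrightarrow> v \<in> span J \<Longrightarrow> refl_word ys v \<in> span J"
  by (induction ys) (auto simp: refl_def intro: span_diff span_scale span_base)

definition shortest_word :: "'a set \<Rightarrow> 'a list \<Rightarrow> bool" where
  "shortest_word J zs \<longleftrightarrow> set zs \<subseteq> J
     \<and> (\<forall>ys. set ys \<subseteq> J \<and> refl_word ys = refl_word zs \<longrightarrow> length zs \<le> length ys)"

lemma exists_shortest_word: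
  assumes "y \<in> refl_group J" shows "\<exists>zs. shortest_word J zs \<and> refl_word zs = y"
proof -
  obtain zs0 where "set zs0 \<subseteq> J \<and> refl_word zs0 = y"
    using refl_group_word assms by metis
  from ex_has_least_nat[of "\<lambda>zs. set zs \<subseteq> J \<and> refl_word zs = y", OF this, of length]
  show ?thesis
    unfolding shortest_word_def by metis
qed

lemma shortest_word_snoc:
  assumes "shortest_word J (ys @ [\<alpha>])" shows "shortest_word J ys"
  unfolding shortest_word_def
proof (intro conjI allI impI)
  show "set ys \<subseteq> J"
    using assms by (simp add: shortest_word_def)
  fix ys' assume ys': "set ys' \<subseteq> J \<and> refl_word ys' = refl_word ys"
  then have "set (ys' @ [\<alpha>]) \<subseteq> J" "refl_word (ys' @ [\<alpha>]) = refl_word (ys @ [\<alpha>])"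
    using assms by (auto simp: shortest_word_def refl_word_append)
  then have "length (ys @ [\<alpha>]) \<le> length (ys' @ [\<alpha>])"
    using assms unfolding shortest_word_def by blast
  then show "length ys \<le> length ys'"
    by simp
qed

lemma shortest_word_snoc_pos_root:
  assumes "J \<subseteq> \<Delta>" "shortest_word J (ys @ [\<alpha>])" shows "pos_root (refl_word ys \<alpha>)"
proof (rule ccontr)
  have ys: "set ys \<subseteq> J" and \<alpha>: "\<alpha> \<in> J"
    using assms(2) by (auto simp: shortest_word_def)
  assume "\<not> pos_root (refl_word ys \<alpha>)"
  then obtain ys' where "set ys' \<subseteq> set ys" "length ys' < length ys"
      "refl_word ys' = refl_word (ys @ [\<alpha>])"
    using refl_word_exchange[of ys \<alpha>] ys \<alpha> assms(1) pos_root_base by (auto simp: refl_word_append)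
  then show False
    using assms(2) ys unfolding shortest_word_def by fastforce
qed

lemma wlen_comp_shortest_word:
  assumes "J \<subseteq> \<Delta>" "x \<in> min_coset_reps J" "shortest_word J zs"
  shows "len (x \<circ> refl_word zs) = len x + length zs"
  using assms(3)
proof (induction zs rule: rev_induct)
  case (snoc \<alpha> ys)
  have ys: "set ys \<subseteq> J" and \<alpha>: "\<alpha> \<in> \<Delta>"
    using snoc.prems assms(1) by (auto simp: shortest_word_def)
  let ?y = "x \<circ> refl_word ys"
  have y: "?y \<in> W"
    using refl_group_comp min_coset_reps_W[OF assms(2)] refl_word_in_refl_group ys assms(1) by blast
  have "pos_root (x (refl_word ys \<alpha>))"
    using min_coset_reps_pos_root_span[OF assms(1,2) shortest_word_snoc_pos_root[OF assms(1) snoc.prems]]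
      refl_word_span[OF ys span_base] snoc.prems by (simp add: shortest_word_def)
  then have "len ?y < len (?y \<circ> refl \<alpha>)"
    using wlen_less_comp_refl[OF y W_comp_refl[OF \<alpha> y] pos_root_base[OF \<alpha>]] by simp
  then have "len (?y \<circ> refl \<alpha>) = len ?y + 1"
    using wlen_comp_refl[OF \<alpha> y] by linarith
  moreover have "x \<circ> refl_word (ys @ [\<alpha>]) = ?y \<circ> refl \<alpha>"
    by (simp only: refl_word_append refl_word_Cons refl_word_Nil comp_id comp_assoc)
  ultimately show ?case
    using snoc.IH[OF shortest_word_snoc[OF snoc.prems]] by (simp only: length_append_singleton)
qed simp

lemma wlen_comp_min_coset_rep:
  assumes "J \<subseteq> \<Delta>" "x \<in> min_coset_reps J" "y \<in> refl_group J"
  shows "len (x \<circ> y) = len x + len y"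
proof -
  obtain zs where "shortest_word J zs" "refl_word zs = y"
    using exists_shortest_word assms(3) by blast
  then show ?thesis
    using wlen_comp_shortest_word[OF assms(1,2)] wlen_comp_shortest_word[OF assms(1) id_min_coset_reps[OF assms(1)]]
    by fastforce
qed


lemma min_coset_rep_wlen_le:
  assumes "J \<subseteq> \<Delta>" "x \<in> min_coset_reps J" "v \<in> coset J x" shows "len x \<le> len v"
  using coset_elem[OF assms(3)] wlen_comp_min_coset_rep[OF assms(1,2)] by auto

lemma min_coset_reps_unique:
  assumes "J \<subseteq> \<Delta>" "x \<in> min_coset_reps J" "x' \<in> min_coset_reps J" "coset J x = coset J x'"
  shows "x = x'"
proof -
  obtain y where y: "y \<in> refl_group J" "x' = x \<circ> y"
    using coset_elem coset_self assms(4) by metis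
  have "len x \<le> len x'"
    using min_coset_rep_wlen_le assms coset_self by metis
  moreover have "len x' \<le> len x"
    using min_coset_rep_wlen_le assms coset_self by metis
  ultimately have "len y = 0"
    using wlen_comp_min_coset_rep[OF assms(1,2) y(1)] y(2) by simp
  then have "y = id"
    using wlen_eq_0 refl_group_mono[OF assms(1) y(1)] by blast
  with y(2) show ?thesis
    by simp
qed

lemma min_rep_coset_iff:
  assumes "J \<subseteq> \<Delta>" "w \<in> W"
  shows "min_rep \<Delta> (coset J w) x \<longleftrightarrow> x \<in> min_coset_reps J \<and> x \<in> coset J w"
proof
  assume min: "min_rep \<Delta> (coset J w) x"
  then have x: "x \<in> coset J w" "x \<in> W"
    using coset_subset_refl_group[OF assms] by (auto simp: min_rep_def)
  have "pos_root (x \<alpha>)" if "\<alpha> \<in> J" for \<alpha>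
  proof (rule ccontr)
    assume "\<not> pos_root (x \<alpha>)"
    then have "len (x \<circ> refl \<alpha>) < len x"
      using wlen_comp_refl_less(2)[OF x(2) pos_root_base] that assms(1) by blast
    moreover have "x \<circ> refl \<alpha> \<in> coset J w"
      using coset_comp refl_in_refl_group[OF that] coset_self x(1) coset_eq by metis
    ultimately show False
      using min by (force simp: min_rep_def)
  qed
  with x show "x \<in> min_coset_reps J \<and> x \<in> coset J w"
    by (simp add: min_coset_reps_def)
next
  assume "x \<in> min_coset_reps J \<and> x \<in> coset J w"
  then show "min_rep \<Delta> (coset J w) x"
    using min_coset_rep_wlen_le[OF assms(1)] coset_eq by (metis min_rep_def)
qed

lemma exists_min_coset_rep:
  assumes "J \<subseteq> \<Delta>" "w \<in> W" shows "\<exists>x. x \<in> min_coset_reps J \<and> x \<in> coset J w"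
proof -
  obtain x where "x \<in> coset J w" "\<forall>y. y \<in> coset J w \<longrightarrow> len x \<le> len y"
    using ex_has_least_nat[of "\<lambda>y. y \<in> coset J w" w len] coset_self by blast
  then have "min_rep \<Delta> (coset J w) x"
    by (simp add: min_rep_def)
  then show ?thesis
    using min_rep_coset_iff[OF assms] by blast
qed

definition min_rep_of :: "'a set \<Rightarrow> ('a \<Rightarrow> 'a) \<Rightarrow> ('a \<Rightarrow> 'a)" where
  "min_rep_of J w = (SOME x. x \<in> min_coset_reps J \<and> x \<in> coset J w)"

lemma min_rep_of_spec: "J \<subseteq> \<Delta> \<Longrightarrow> w \<in> W \<Longrightarrow> min_rep_of J w \<in> min_coset_reps J \<and> min_rep_of J w \<in> coset J w"
  unfolding min_rep_of_def using exists_min_coset_rep by (rule someI_ex)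

lemma min_rep_of_eq:
  assumes "J \<subseteq> \<Delta>" "w \<in> W" "x \<in> min_coset_reps J" "x \<in> coset J w"
  shows "min_rep_of J w = x"
  using min_rep_of_spec[OF assms(1,2)] assms min_coset_reps_unique coset_eq by metis

lemma coset_min_rep_of: "J \<subseteq> \<Delta> \<Longrightarrow> w \<in> W \<Longrightarrow> coset J (min_rep_of J w) = coset J w"
  using min_rep_of_spec coset_eq by blast

lemma refl_comp_min_coset_reps_cases:
  assumes "x \<in> min_coset_reps J" "\<alpha> \<in> \<Delta>"
  shows "refl \<alpha> \<circ> x \<in> min_coset_reps J \<or> (\<exists>\<gamma>\<in>J. refl \<alpha> \<circ> x = x \<circ> refl \<gamma>)"
proof (cases "refl \<alpha> \<circ> x \<in> min_coset_reps J")
  case False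
  then obtain \<gamma> where \<gamma>: "\<gamma> \<in> J" "\<not> pos_root (refl \<alpha> (x \<gamma>))"
    using refl_comp_W[OF assms(2) min_coset_reps_W[OF assms(1)]] by (auto simp: min_coset_reps_def)
  then have "x \<gamma> = \<alpha>"
    using pos_root_refl_simple[OF assms(2) min_coset_reps_pos_root[OF assms(1)]] by blast
  then show ?thesis
    using refl_conjugate[OF orthogonal_transformation_refl_group[OF min_coset_reps_W[OF assms(1)]]] \<gamma>(1)
    by metis
qed simp

lemma min_coset_rep_wlen_comp_refl:
  assumes "J \<subseteq> \<Delta>" "x \<in> min_coset_reps J" "\<gamma> \<in> J" shows "len x < len (x \<circ> refl \<gamma>)"
  using wlen_less_comp_refl[of x \<gamma>] W_comp_refl pos_root_base min_coset_reps_W min_coset_reps_pos_root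
    assms by blast

lemma refl_comp_min_coset_rep_descent:
  assumes "J \<subseteq> \<Delta>" "x \<in> min_coset_reps J" "\<alpha> \<in> \<Delta>" "len (refl \<alpha> \<circ> x) < len x"
  shows "refl \<alpha> \<circ> x \<in> min_coset_reps J"
  using refl_comp_min_coset_reps_cases[OF assms(2,3)] min_coset_rep_wlen_comp_refl[OF assms(1,2)] assms(4)
  by fastforce

lemma min_rep_of_refl_comp:
  assumes "J \<subseteq> \<Delta>" "w \<in> W" "\<alpha> \<in> \<Delta>"
  shows "min_rep_of J (refl \<alpha> \<circ> w)
           = (if refl \<alpha> \<circ> min_rep_of J w \<in> min_coset_reps J then refl \<alpha> \<circ> min_rep_of J w
              else min_rep_of J w)"
proof -
  let ?x = "min_rep_of J w"
  have x: "?x \<in> min_coset_reps J"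
    using min_rep_of_spec assms(1,2) by blast
  have "coset J (refl \<alpha> \<circ> w) = coset J (refl \<alpha> \<circ> ?x)"
    using coset_min_rep_of[OF assms(1,2)] coset_refl_comp_cancel by metis
  moreover have "refl \<alpha> \<circ> w \<in> W"
    using refl_comp_W assms by blast
  moreover have "coset J (refl \<alpha> \<circ> ?x) = coset J ?x" if "refl \<alpha> \<circ> ?x \<notin> min_coset_reps J"
    using refl_comp_min_coset_reps_cases[OF x assms(3)] that coset_comp refl_in_refl_group by metis
  ultimately show ?thesis
    using min_rep_of_eq[OF assms(1)] x coset_self by (metis (full_types))
qed


section \<open>Monotonicity of the projection to minimal representatives\<close>

lemma refl_comp_min_rep_of_descent:
  assumes "J \<subseteq> \<Delta>" "w \<in> W" "\<alpha> \<in> \<Delta>" "len (refl \<alpha> \<circ> w) < len w"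
    and "refl \<alpha> \<circ> min_rep_of J w \<in> min_coset_reps J"
  shows "len (refl \<alpha> \<circ> min_rep_of J w) < len (min_rep_of J w)"
proof -
  let ?x = "min_rep_of J w"
  obtain y where y: "y \<in> refl_group J" "?x \<circ> y = w"
    using min_rep_of_spec[OF assms(1,2)] coset_elem coset_eq coset_self by metis
  have "len w = len ?x + len y"
    using wlen_comp_min_coset_rep[OF assms(1) conjunct1[OF min_rep_of_spec[OF assms(1,2)]] y(1)] y(2) by simp
  moreover have "len (refl \<alpha> \<circ> w) = len (refl \<alpha> \<circ> ?x) + len y"
    using wlen_comp_min_coset_rep[OF assms(1,5) y(1)] y(2) by (simp add: comp_assoc)
  ultimately show ?thesis
    using assms(4) by linarith
qed

lemma min_rep_of_refl_comp_le:
  assumes "J \<subseteq> \<Delta>" "w \<in> W" "\<alpha> \<in> \<Delta>" "len (refl \<alpha> \<circ> w) < len w"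
  shows "min_rep_of J (refl \<alpha> \<circ> w) \<preceq> min_rep_of J w"
  using min_rep_of_refl_comp[OF assms(1-3)] refl_comp_min_rep_of_descent[OF assms]
    refl_comp_bruhat_le[OF assms(3)] min_rep_of_spec[OF assms(1,2)] min_coset_reps_W
  by auto

lemma min_coset_rep_le_refl_comp_cases:
  assumes "J \<subseteq> \<Delta>" "u \<in> min_coset_reps J" "v \<in> min_coset_reps J" "\<alpha> \<in> \<Delta>" "u \<preceq> refl \<alpha> \<circ> v"
  shows "u \<preceq> v \<or> (refl \<alpha> \<circ> v \<in> min_coset_reps J \<and> len v < len (refl \<alpha> \<circ> v))"
proof -
  have v: "v \<in> W"
    using assms(3) min_coset_reps_W by blast
  consider "len (refl \<alpha> \<circ> v) < len v" | "len v < len (refl \<alpha> \<circ> v)"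
    using wlen_refl_comp[OF assms(4) v] by linarith
  then show ?thesis
  proof cases
    case 1
    then show ?thesis
      using refl_comp_bruhat_le[OF assms(4) v] assms(5) bruhat_le_trans by blast
  next
    case 2
    from refl_comp_min_coset_reps_cases[OF assms(3,4)] show ?thesis
    proof
      assume "\<exists>\<gamma>\<in>J. refl \<alpha> \<circ> v = v \<circ> refl \<gamma>"
      then obtain \<gamma> where "\<gamma> \<in> J" "refl \<alpha> \<circ> v = v \<circ> refl \<gamma>"
        by blast
      then show ?thesis
        using bruhat_le_of_le_comp_refl[of u v \<gamma>] min_coset_rep_wlen_comp_refl assms v by auto
    qed (use 2 in blast)
  qed
qed

lemma min_coset_rep_le_of_le_refl_comp:
  assumes "J \<subseteq> \<Delta>" "u \<in> min_coset_reps J" "v \<in> min_coset_reps J" "\<alpha> \<in> \<Delta>" "u \<preceq> refl \<alpha> \<circ> v"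
    and "refl \<alpha> \<circ> v \<in> min_coset_reps J \<Longrightarrow> len (refl \<alpha> \<circ> v) < len v"
  shows "u \<preceq> v"
  using min_coset_rep_le_refl_comp_cases[OF assms(1-5)] assms(6) by auto

lemma min_rep_of_le_of_refl_comp_le:
  assumes J: "J \<subseteq> \<Delta>" and u: "u \<in> W" and w: "w \<in> W"
    and \<alpha>: "\<alpha> \<in> \<Delta>" "len (refl \<alpha> \<circ> w) < len w"
    and le: "min_rep_of J (refl \<alpha> \<circ> u) \<preceq> min_rep_of J w"
  shows "min_rep_of J u \<preceq> min_rep_of J w"
proof (cases "refl \<alpha> \<circ> min_rep_of J u \<in> min_coset_reps J")
  case True
  let ?z = "min_rep_of J w" and ?p = "min_rep_of J u"
  have z: "?z \<in> min_coset_reps J" and p: "?p \<in> min_coset_reps J"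
    using min_rep_of_spec J u w by blast+
  have "refl \<alpha> \<circ> ?p \<preceq> ?z"
    using True le min_rep_of_refl_comp[OF J u \<alpha>(1)] by simp
  from bruhat_le_lifting[OF this min_coset_reps_W[OF z] \<alpha>(1)]
  have "?p \<preceq> ?z \<or> ?p \<preceq> refl \<alpha> \<circ> ?z"
    by (simp only: refl_comp_refl_comp)
  then show ?thesis
    using min_coset_rep_le_of_le_refl_comp[OF J p z \<alpha>(1)] refl_comp_min_rep_of_descent[OF J w \<alpha>]
    by blast
next
  case False
  then show ?thesis
    using le min_rep_of_refl_comp[OF J u \<alpha>(1)] by simp
qed

lemma min_rep_of_mono:
  assumes "J \<subseteq> \<Delta>" "u \<preceq> w" "w \<in> W"
  shows "min_rep_of J u \<preceq> min_rep_of J w"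
  using assms(2,3)
proof (induction "len w" arbitrary: u w rule: less_induct)
  case less
  show ?case
  proof (cases "w = id")
    case True
    then show ?thesis
      using bruhat_le_wlen[OF less.prems(1)] by auto
  next
    case False
    then obtain \<alpha> where \<alpha>: "\<alpha> \<in> \<Delta>" "len (refl \<alpha> \<circ> w) < len w"
      using exists_left_descent less.prems(2) by blast
    have IH: "min_rep_of J u' \<preceq> min_rep_of J w" if "u' \<preceq> refl \<alpha> \<circ> w" for u'
      using less.hyps[OF \<alpha>(2) that] refl_comp_W \<alpha>(1) less.prems(2)
        min_rep_of_refl_comp_le[OF assms(1) less.prems(2) \<alpha>] bruhat_le_trans by blast
    from bruhat_le_lifting_descent[OF less.prems \<alpha>] show ?thesis
    proof
      assume "refl \<alpha> \<circ> u \<preceq> refl \<alpha> \<circ> w"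
      then show ?thesis
        using IH min_rep_of_le_of_refl_comp_le[OF assms(1) _ less.prems(2) \<alpha>] bruhat_le_W less.prems
        by blast
    qed (rule IH)
  qed
qed

lemma min_rep_of_neq_id:
  assumes "K \<subseteq> \<Delta>" "u \<preceq> w" "w \<in> W" "coset K u \<noteq> coset K w"
  shows "min_rep_of K w \<noteq> id"
proof
  assume w_id: "min_rep_of K w = id"
  then have "min_rep_of K u = id"
    using min_rep_of_mono[OF assms(1-3)] bruhat_le_wlen by fastforce
  then show False
    using coset_min_rep_of[OF assms(1)] bruhat_le_W assms w_id by metis
qed

lemma exists_descent_leaving_coset:
  assumes "K \<subseteq> \<Delta>" "w \<in> W" "min_rep_of K w \<noteq> id"
  shows "\<exists>\<alpha>\<in>\<Delta>. len (refl \<alpha> \<circ> w) < len w \<and> coset K (refl \<alpha> \<circ> w) \<noteq> coset K w"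
proof -
  let ?x = "min_rep_of K w"
  have x: "?x \<in> min_coset_reps K" "coset K ?x = coset K w"
    using min_rep_of_spec[OF assms(1,2)] coset_min_rep_of[OF assms(1,2)] by blast+
  obtain \<alpha> where \<alpha>: "\<alpha> \<in> \<Delta>" "len (refl \<alpha> \<circ> ?x) < len ?x"
    using exists_left_descent min_coset_reps_W x(1) assms(3) by blast
  have x\<alpha>: "refl \<alpha> \<circ> ?x \<in> min_coset_reps K"
    using refl_comp_min_coset_rep_descent[OF assms(1) x(1) \<alpha>] .
  obtain y where y: "y \<in> refl_group K" "?x \<circ> y = w"
    using x(2) coset_elem coset_self by metis
  have "len w = len ?x + len y"
    using wlen_comp_min_coset_rep[OF assms(1) x(1) y(1)] y(2) by simp
  moreover have "len (refl \<alpha> \<circ> w) = len (refl \<alpha> \<circ> ?x) + len y"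
    using wlen_comp_min_coset_rep[OF assms(1) x\<alpha> y(1)] y(2) by (simp add: comp_assoc)
  moreover have "coset K (refl \<alpha> \<circ> w) \<noteq> coset K w"
  proof
    assume "coset K (refl \<alpha> \<circ> w) = coset K w"
    then have "coset K (refl \<alpha> \<circ> ?x) = coset K ?x"
      using x(2) coset_refl_comp_cancel by metis
    then show False
      using min_coset_reps_unique[OF assms(1) x\<alpha> x(1)] \<alpha>(2) by simp
  qed
  ultimately show ?thesis
    using \<alpha> by auto
qed


section \<open>Coatoms outside a parabolic coset\<close>

lemma coatom_lift_through_descent:
  assumes J: "J \<subseteq> \<Delta>" and \<alpha>: "\<alpha> \<in> \<Delta>" "len (refl \<alpha> \<circ> w) < len w" and w: "w \<in> W"
    and u: "u \<in> min_coset_reps J" and v: "v \<in> min_coset_reps J"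
    and le: "refl \<alpha> \<circ> u \<preceq> v" "v \<preceq> refl \<alpha> \<circ> w"
    and len_v: "len v + 1 = len (refl \<alpha> \<circ> w)"
    and coset_v: "coset K v \<noteq> coset K (refl \<alpha> \<circ> w)"
  shows "u \<preceq> v \<or> (refl \<alpha> \<circ> v \<in> min_coset_reps J \<and> u \<preceq> refl \<alpha> \<circ> v \<and> refl \<alpha> \<circ> v \<preceq> w
                    \<and> len (refl \<alpha> \<circ> v) + 1 = len w \<and> coset K (refl \<alpha> \<circ> v) \<noteq> coset K w)"
proof -
  have vW: "v \<in> W"
    using v min_coset_reps_W by blast
  from bruhat_le_lifting[OF le(1) vW \<alpha>(1)]
  have "u \<preceq> v \<or> u \<preceq> refl \<alpha> \<circ> v"
    by (simp only: refl_comp_refl_comp)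
  then have "u \<preceq> v \<or> (u \<preceq> refl \<alpha> \<circ> v \<and> refl \<alpha> \<circ> v \<in> min_coset_reps J \<and> len v < len (refl \<alpha> \<circ> v))"
    using min_coset_rep_le_refl_comp_cases[OF J u v \<alpha>(1)] by blast
  moreover have "refl \<alpha> \<circ> v \<preceq> w"
  proof -
    from bruhat_le_lifting[OF le(2) refl_comp_W[OF \<alpha>(1) w] \<alpha>(1)]
    have "refl \<alpha> \<circ> v \<preceq> refl \<alpha> \<circ> w \<or> refl \<alpha> \<circ> v \<preceq> w"
      by (simp only: refl_comp_refl_comp)
    then show ?thesis
      using refl_comp_bruhat_le[OF \<alpha>(1) w \<alpha>(2)] bruhat_le_trans by blast
  qed
  moreover have "len (refl \<alpha> \<circ> v) + 1 = len w" if "len v < len (refl \<alpha> \<circ> v)"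
    using that wlen_refl_comp[OF \<alpha>(1) vW] wlen_refl_comp[OF \<alpha>(1) w] len_v \<alpha>(2) by linarith
  moreover have "coset K (refl \<alpha> \<circ> v) \<noteq> coset K w"
    using coset_v coset_refl_comp_cancel[of K \<alpha> v "refl \<alpha> \<circ> w"] by simp
  ultimately show ?thesis
    by blast
qed

lemma exists_coatom_leaving_coset:
  assumes J: "J \<subseteq> \<Delta>" and K: "K \<subseteq> \<Delta>"
    and "u \<in> min_coset_reps J" "w \<in> min_coset_reps J" "u \<preceq> w" "coset K u \<noteq> coset K w"
  shows "\<exists>v\<in>min_coset_reps J. u \<preceq> v \<and> v \<preceq> w \<and> len v + 1 = len w \<and> coset K v \<noteq> coset K w"
  using assms(3-6)
proof (induction "len w" arbitrary: u w rule: less_induct)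
  case less
  have u: "u \<in> W" and w: "w \<in> W"
    using less.prems min_coset_reps_W by blast+
  obtain \<alpha> where \<alpha>: "\<alpha> \<in> \<Delta>" "len (refl \<alpha> \<circ> w) < len w"
    and leave: "coset K (refl \<alpha> \<circ> w) \<noteq> coset K w"
    using exists_descent_leaving_coset[OF K w min_rep_of_neq_id[OF K less.prems(3) w less.prems(4)]]
    by blast
  let ?w' = "refl \<alpha> \<circ> w"
  have w': "?w' \<in> min_coset_reps J" "?w' \<preceq> w" "len ?w' + 1 = len w"
    using refl_comp_min_coset_rep_descent[OF J less.prems(2) \<alpha>] refl_comp_bruhat_le[OF \<alpha>(1) w \<alpha>(2)]
      wlen_refl_comp[OF \<alpha>(1) w] \<alpha>(2) by auto
  have below_w': "\<exists>v\<in>min_coset_reps J. u \<preceq> v \<and> v \<preceq> w \<and> len v + 1 = len w \<and> coset K v \<noteq> coset K w"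
    if "u \<preceq> ?w'"
    using that w' leave by blast
  from bruhat_le_lifting_descent[OF less.prems(3) w \<alpha>] show ?case
  proof
    assume su: "refl \<alpha> \<circ> u \<preceq> ?w'"
    consider "len u < len (refl \<alpha> \<circ> u)" | "len (refl \<alpha> \<circ> u) < len u"
      using wlen_refl_comp[OF \<alpha>(1) u] by linarith
    then show ?case
    proof cases
      case 1
      then show ?thesis
        using bruhat_le_refl_comp[OF \<alpha>(1) u] su bruhat_le_trans below_w' by blast
    next
      case 2
      have "refl \<alpha> \<circ> u \<in> min_coset_reps J"
        using refl_comp_min_coset_rep_descent[OF J less.prems(1) \<alpha>(1) 2] .
      moreover have "coset K (refl \<alpha> \<circ> u) \<noteq> coset K ?w'"
        using less.prems(4) coset_refl_comp_cancel by blast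
      ultimately obtain v where v: "v \<in> min_coset_reps J" "refl \<alpha> \<circ> u \<preceq> v" "v \<preceq> ?w'"
          "len v + 1 = len ?w'" "coset K v \<noteq> coset K ?w'"
        using less.hyps[OF \<alpha>(2)] w'(1) su by blast
      from coatom_lift_through_descent[OF J \<alpha> w less.prems(1) v] show ?thesis
        using v(3) below_w' bruhat_le_trans by blast
    qed
  qed (rule below_w')
qed

section \<open>The Bruhat order on cosets\<close>

lemma quot_min_coset_rep:
  assumes "J \<subseteq> \<Delta>" "X \<in> quot \<Delta> J" shows "\<exists>x\<in>min_coset_reps J. X = coset J x"
  using assms exists_min_coset_rep coset_eq unfolding quot_def by (metis imageE)

lemma coset_in_quot: "w \<in> W \<Longrightarrow> coset J w \<in> quot \<Delta> J"
  by (simp add: quot_def)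

lemma min_rep_coset_iff_eq:
  assumes "J \<subseteq> \<Delta>" "x \<in> min_coset_reps J" shows "min_rep \<Delta> (coset J x) y \<longleftrightarrow> y = x"
  using min_rep_coset_iff[OF assms(1) min_coset_reps_W[OF assms(2)]] min_coset_reps_unique[OF assms(1)]
    assms(2) coset_eq coset_self by metis

lemma quot_le_coset_iff:
  assumes "J \<subseteq> \<Delta>" "x \<in> min_coset_reps J" "y \<in> min_coset_reps J"
  shows "quot_le R \<Delta> (coset J x) (coset J y) \<longleftrightarrow> x \<preceq> y"
  unfolding quot_le_def
  by (simp add: min_rep_coset_iff_eq[OF assms(1,2)] min_rep_coset_iff_eq[OF assms(1,3)])

lemma quot_less_coset_iff:
  assumes "J \<subseteq> \<Delta>" "x \<in> min_coset_reps J" "y \<in> min_coset_reps J"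
  shows "quot_less R \<Delta> (coset J x) (coset J y) \<longleftrightarrow> x \<preceq> y \<and> x \<noteq> y"
  using quot_le_coset_iff[OF assms] min_coset_reps_unique[OF assms] unfolding quot_less_def by blast

lemma quot_covers_coset:
  assumes J: "J \<subseteq> \<Delta>" and x: "x \<in> min_coset_reps J" and y: "y \<in> min_coset_reps J"
    and "x \<preceq> y" "len x + 1 = len y"
  shows "quot_covers R \<Delta> J (coset J y) (coset J x)"
  unfolding quot_covers_def
proof (intro conjI)
  show "coset J x \<in> quot \<Delta> J" "coset J y \<in> quot \<Delta> J"
    using coset_in_quot min_coset_reps_W x y by blast+
  show "quot_less R \<Delta> (coset J x) (coset J y)"
    using quot_less_coset_iff[OF J x y] assms(4,5) by auto
  show "\<not> (\<exists>E\<in>quot \<Delta> J. quot_less R \<Delta> (coset J x) E \<and> quot_less R \<Delta> E (coset J y))"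
  proof
    assume "\<exists>E\<in>quot \<Delta> J. quot_less R \<Delta> (coset J x) E \<and> quot_less R \<Delta> E (coset J y)"
    then obtain z where z: "z \<in> min_coset_reps J" "quot_less R \<Delta> (coset J x) (coset J z)"
        "quot_less R \<Delta> (coset J z) (coset J y)"
      using quot_min_coset_rep[OF J] by blast
    then have "len x < len z" "len z < len y"
      using quot_less_coset_iff[OF J] x y bruhat_le_wlen by blast+
    with assms(5) show False
      by linarith
  qed
qed

lemma quot_less_coset:
  assumes "K \<subseteq> \<Delta>" "v \<preceq> w" "w \<in> W" "coset K v \<noteq> coset K w"
  shows "quot_less R \<Delta> (coset K v) (coset K w)"
proof -
  have "min_rep \<Delta> (coset K u) (min_rep_of K u)" if "u \<in> W" for u
    using min_rep_coset_iff[OF assms(1) that] min_rep_of_spec[OF assms(1) that] by blast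
  then show ?thesis
    using min_rep_of_mono[OF assms(1-3)] bruhat_le_W assms unfolding quot_less_def quot_le_def by blast
qed

end

theorem mainTheorem17:
  fixes R \<Delta> JQ JP :: "'a::euclidean_space set"
    and \<theta> \<phi> :: "('a \<Rightarrow> 'a) set"
  assumes "root_system R" and "is_base R \<Delta>"
    and "JQ \<subseteq> JP" and "JP \<subseteq> \<Delta>"
    and "\<theta> \<in> quot \<Delta> JQ" and "\<phi> \<in> quot \<Delta> JQ"
    and "quot_less R \<Delta> \<phi> \<theta>"
    and "quot_less R \<Delta> (proj JP \<phi>) (proj JP \<theta>)"
  shows "\<exists>\<psi>\<in>quot \<Delta> JQ. quot_covers R \<Delta> JQ \<theta> \<psi> \<and> quot_le R \<Delta> \<phi> \<psi>
           \<and> quot_less R \<Delta> (proj JP \<psi>) (proj JP \<theta>)"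
proof -
  interpret root_base R \<Delta>
    using assms(1,2) by unfold_locales
  have JQ: "JQ \<subseteq> \<Delta>"
    using assms(3,4) by blast
  obtain c d where c: "c \<in> min_coset_reps JQ" "\<phi> = coset JQ c"
    and d: "d \<in> min_coset_reps JQ" "\<theta> = coset JQ d"
    using quot_min_coset_rep[OF JQ] assms(5,6) by metis
  have "c \<preceq> d" "coset JP c \<noteq> coset JP d"
    using assms(7,8) quot_less_coset_iff[OF JQ c(1) d(1)] proj_coset[OF assms(3)] c(2) d(2)
    by (auto simp: quot_less_def)
  then obtain v where v: "v \<in> min_coset_reps JQ" "c \<preceq> v" "v \<preceq> d" "len v + 1 = len d"
      "coset JP v \<noteq> coset JP d"
    using exists_coatom_leaving_coset[OF JQ assms(4) c(1) d(1)] by blast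
  have "quot_covers R \<Delta> JQ \<theta> (coset JQ v)"
    using quot_covers_coset[OF JQ v(1) d(1) v(3,4)] d(2) by simp
  moreover have "quot_le R \<Delta> \<phi> (coset JQ v)"
    using quot_le_coset_iff[OF JQ c(1) v(1)] v(2) c(2) by simp
  moreover have "quot_less R \<Delta> (proj JP (coset JQ v)) (proj JP \<theta>)"
    using quot_less_coset[OF assms(4) v(3) _ v(5)] min_coset_reps_W d
    by (simp add: proj_coset[OF assms(3)])
  ultimately show ?thesis
    using coset_in_quot min_coset_reps_W v(1) by blast
qed

end
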